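(* Let $\mathbb{S}\in\mathbb{Z}^{N_X\times N_e}$, $\mathcal{X}=\mathbb{R}^{N_X}_{>0}$, $\Phi$ a primal thermodynamic function on $\mathcal{X}$ with Legendre conjugate $\Phi^*$, $\tilde{x}\in\mathcal{X}$, and $\{\Psi^*_x\}_{x\in\mathcal{X}}$ a family of dissipation functions on $\mathbb{R}^{N_e}$. Consider the equilibrium flow $$\dot{x}=-\mathbb{S}\,\nabla\Psi^*_x\Big(\mathbb{S}^T\big(\nabla\Phi(x)-\nabla\Phi(\tilde{x})\big)\Big)$$ with initial state $x(0)=x_0\in\mathcal{X}$, flux $j(x)=\nabla\Psi^*_x(\mathbb{S}^T(\nabla\Phi(x)-\nabla\Phi(\tilde x)))$. Define $\mathcal{P}^{sc}(x_0):=\{x\in\mathcal{X}:x-x_0\in\mathrm{Im}\,\mathbb{S}\}$ (the set in which the trajectory from $x_0$ stays), $\mathcal{M}^{eq}(\tilde{x}):=\{x\in\mathcal{X}:\nabla\Phi(x)-\nabla\Phi(\tilde{x})\in\mathrm{Ker}\,\mathbb{S}^T\}$, and $\mathcal{M}^{\mathrm{DB}}:=\{x\in\mathcal{X}:j(x)=0\}$. Then the steady state $x_{eq}$ of the flow started from $x_0$ (the equilibrium state) is the point $x^\dagger$ forming the intersection $\mathcal{P}^{sc}(x_0)\cap\mathcal{M}^{eq}(\tilde{x})$; hence it exists and is unique for each pair $(x_0,\tilde{x})$. Moreover, $$x_{eq}=\arg\min_{x\in\mathcal{P}^{sc}(x_0)}\mathcal{D}_\Phi[x\|\tilde{x}]=\arg\min_{x_q\in\mathcal{M}^{eq}(\tilde{x})}\mathcal{D}_\Phi[x_0\|x_q],$$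 and $\mathcal{M}^{eq}(\tilde{x})=\mathcal{M}^{\mathrm{DB}}$.
   Context: A primal thermodynamic function is a strictly convex differentiable $\Phi:\mathcal{X}\to\mathbb{R}$ such that $\{\nabla\Phi(x):x\in\mathcal{X}\}=\mathbb{R}^{N_X}$ and, for every $x_{in}\in\mathcal{X}$ and $x_{bd}\in\mathbb{R}^{N_X}_{\ge0}\setminus\mathcal{X}$, $\lim_{\lambda\to0^+}\frac{d}{d\lambda}\Phi(\lambda x_{in}+(1-\lambda)x_{bd})=-\infty$. $\Phi^*(y)=\max_{x\in\mathcal{X}}[\langle x,y\rangle-\Phi(x)]$ on $\mathbb{R}^{N_X}$, and $\nabla\Phi,\nabla\Phi^*$ are mutually inverse bijections between $\mathcal{X}$ and $\mathbb{R}^{N_X}$. The Bregman divergence is $\mathcal{D}_\Phi[x\|x']=\Phi(x)-\Phi(x')-\langle x-x',\nabla\Phi(x')\rangle$. A dissipation function on $\mathbb{R}^{N_e}$ is a strictly convex, continuously differentiable, $1$-coercive ($\psi(f)/\|f\|\to\infty$), even function $\psi$ with $\psi(0)=0$. A steady state is a point where $\dot{x}=0$. *)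

theory Defs
  imports "HOL-Analysis.Analysis"
begin

definition pos_orthant :: "(real^'n) set" where
  "pos_orthant = {x. \<forall>i. x $ i > 0}"

definition strictly_convex_on :: "'a::real_vector set \<Rightarrow> ('a \<Rightarrow> real) \<Rightarrow> bool" where
  "strictly_convex_on S f \<longleftrightarrow> convex S \<and>
     (\<forall>x\<in>S. \<forall>y\<in>S. x \<noteq> y \<longrightarrow> (\<forall>t::real. 0 < t \<and> t < 1 \<longrightarrow>
        f (t *\<^sub>R x + (1 - t) *\<^sub>R y) < t * f x + (1 - t) * f y))"

definition primal_thermodynamic ::
  "(real^'n \<Rightarrow> real) \<Rightarrow> (real^'n \<Rightarrow> real^'n) \<Rightarrow> bool" where
  "primal_thermodynamic Phi gPhi \<longleftrightarrow>
     strictly_convex_on pos_orthant Phi \<and>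
     (\<forall>x\<in>pos_orthant. GDERIV Phi x :> gPhi x) \<and>
     gPhi ` pos_orthant = UNIV \<and>
     (\<forall>xin\<in>pos_orthant. \<forall>xbd. (\<forall>i. xbd $ i \<ge> 0) \<and> xbd \<notin> pos_orthant \<longrightarrow>
        filterlim (\<lambda>l. deriv (\<lambda>s. Phi (s *\<^sub>R xin + (1 - s) *\<^sub>R xbd)) l) at_bot (at_right 0))"

definition legendre_conj :: "(real^'n \<Rightarrow> real) \<Rightarrow> real^'n \<Rightarrow> real" where
  "legendre_conj Phi y = (SUP x\<in>pos_orthant. x \<bullet> y - Phi x)"

definition dissipation_function ::
  "('e::euclidean_space \<Rightarrow> real) \<Rightarrow> ('e \<Rightarrow> 'e) \<Rightarrow> bool" where
  "dissipation_function psi gpsi \<longleftrightarrow>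
     strictly_convex_on UNIV psi \<and>
     (\<forall>f. GDERIV psi f :> gpsi f) \<and> continuous_on UNIV gpsi \<and>
     filterlim (\<lambda>f. psi f / norm f) at_top at_infinity \<and>
     (\<forall>f. psi (- f) = psi f) \<and> psi 0 = 0"

definition bregman ::
  "(real^'n \<Rightarrow> real) \<Rightarrow> (real^'n \<Rightarrow> real^'n) \<Rightarrow> real^'n \<Rightarrow> real^'n \<Rightarrow> real" where
  "bregman Phi gPhi x x' = Phi x - Phi x' - (x - x') \<bullet> gPhi x'"

definition Psc :: "real^'e^'n \<Rightarrow> real^'n \<Rightarrow> (real^'n) set" where
  "Psc S x0 = {x \<in> pos_orthant. x - x0 \<in> range (\<lambda>v. S *v v)}"

definition Meq :: "real^'e^'n \<Rightarrow> (real^'n \<Rightarrow> real^'n) \<Rightarrow> real^'n \<Rightarrow> (real^'n) set" where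
  "Meq S gPhi xt = {x \<in> pos_orthant. transpose S *v (gPhi x - gPhi xt) = 0}"

definition flux :: "real^'e^'n \<Rightarrow> (real^'n \<Rightarrow> real^'n) \<Rightarrow> (real^'n \<Rightarrow> real^'e \<Rightarrow> real^'e)
     \<Rightarrow> real^'n \<Rightarrow> real^'n \<Rightarrow> real^'e" where
  "flux S gPhi gPsi xt x = gPsi x (transpose S *v (gPhi x - gPhi xt))"

definition eq_flow_rhs :: "real^'e^'n \<Rightarrow> (real^'n \<Rightarrow> real^'n) \<Rightarrow> (real^'n \<Rightarrow> real^'e \<Rightarrow> real^'e)
     \<Rightarrow> real^'n \<Rightarrow> real^'n \<Rightarrow> real^'n" where
  "eq_flow_rhs S gPhi gPsi xt x = - (S *v flux S gPhi gPsi xt x)"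

definition MDB :: "real^'e^'n \<Rightarrow> (real^'n \<Rightarrow> real^'n) \<Rightarrow> (real^'n \<Rightarrow> real^'e \<Rightarrow> real^'e)
     \<Rightarrow> real^'n \<Rightarrow> (real^'n) set" where
  "MDB S gPhi gPsi xt = {x \<in> pos_orthant. flux S gPhi gPsi xt x = 0}"

end

theory Submission
  imports Defs
begin

text \<open>
  The gradient of \<open>\<D>\<^sub>\<Phi>[\<cdot>\<parallel>x\<^sub>t]\<close> at \<open>x\<close> is \<open>\<nabla>\<Phi>(x) - \<nabla>\<Phi>(x\<^sub>t)\<close>. This function grows at
  least linearly on the orthant, so a minimising sequence in the closed affine set
  \<open>x\<^sub>0 + Im S\<close> has a limit point; steepness of \<open>\<Phi>\<close> keeps that point off the boundary of the
  orthant, so it minimises \<open>\<D>\<^sub>\<Phi>[\<cdot>\<parallel>x\<^sub>t]\<close> over \<open>P\<^sup>s\<^sup>c(x\<^sub>0)\<close>, and the first-order condition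
  places it in \<open>M\<^sup>e\<^sup>q(x\<^sub>t)\<close>. Since \<open>Im S\<close> is orthogonal to \<open>Ker S\<^sup>T\<close>, the three-point identity
  of Bregman divergences becomes the Pythagorean identity \<open>\<D>[x\<parallel>q] = \<D>[x\<parallel>p] + \<D>[p\<parallel>q]\<close>
  for \<open>x \<in> P\<^sup>s\<^sup>c(x\<^sub>0)\<close>, \<open>q \<in> M\<^sup>e\<^sup>q(x\<^sub>t)\<close> and \<open>p\<close> in their intersection; it gives uniqueness of
  the intersection point and both variational characterisations. Finally
  \<open>\<langle>f, \<nabla>\<Psi>\<^sup>*(f)\<rangle> > 0\<close> for \<open>f \<noteq> 0\<close>, so the flux vanishes exactly on \<open>M\<^sup>e\<^sup>q(x\<^sub>t)\<close>, and
  already \<open>S j(x) = 0\<close> forces \<open>S\<^sup>T(\<nabla>\<Phi>(x) - \<nabla>\<Phi>(x\<^sub>t)) = 0\<close>.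
\<close>

lemma has_real_derivative_GDERIV_line:
  fixes f :: "'a::real_inner \<Rightarrow> real"
  assumes "GDERIV f (x + t *\<^sub>R v) :> D"
  shows "((\<lambda>s. f (x + s *\<^sub>R v)) has_real_derivative (v \<bullet> D)) (at t)"
proof -
  have "((\<lambda>s. x + s *\<^sub>R v) has_derivative (\<lambda>h. h *\<^sub>R v)) (at t)"
    by (auto intro!: derivative_eq_intros)
  from has_derivative_compose[OF this assms[unfolded gderiv_def]]
  have "((\<lambda>s. f (x + s *\<^sub>R v)) has_derivative (\<lambda>h. (h *\<^sub>R v) \<bullet> D)) (at t)"
    by (simp add: o_def)
  moreover have "(\<lambda>h. (h *\<^sub>R v) \<bullet> D) = (*) (v \<bullet> D)"
    by (auto simp: fun_eq_iff)
  ultimately show ?thesis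
    unfolding has_field_derivative_def by simp
qed

lemma strictly_convex_onD:
  assumes "strictly_convex_on S f" "x \<in> S" "y \<in> S" "x \<noteq> y" "0 < t" "t < 1"
  shows "f (t *\<^sub>R x + (1 - t) *\<^sub>R y) < t * f x + (1 - t) * f y"
  using assms unfolding strictly_convex_on_def by blast

lemma strictly_convex_on_imp_convex_on:
  assumes "strictly_convex_on S f"
  shows "convex_on S f"
proof (rule convex_onI)
  show "convex S"
    using assms unfolding strictly_convex_on_def by blast
  fix t :: real and x y assume t: "0 < t" "t < 1" and xy: "x \<in> S" "y \<in> S"
  show "f ((1 - t) *\<^sub>R x + t *\<^sub>R y) \<le> (1 - t) * f x + t * f y"
  proof (cases "x = y")
    case True
    then show ?thesis by (simp add: algebra_simps)
  next
    case False
    from strictly_convex_onD[OF assms xy(2,1) _ t] False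
    show ?thesis by (simp add: add.commute)
  qed
qed

lemma convex_on_gradient_ineq:
  fixes f :: "'a::real_inner \<Rightarrow> real"
  assumes conv: "convex_on S f" and "x \<in> S" "y \<in> S" and D: "GDERIV f x :> D"
  shows "f x + (y - x) \<bullet> D \<le> f y"
proof -
  define h where "h s = f (x + s *\<^sub>R (y - x))" for s
  have "(h has_real_derivative ((y - x) \<bullet> D)) (at 0)"
    unfolding h_def by (rule has_real_derivative_GDERIV_line) (use D in simp)
  then have lim: "((\<lambda>s. (h s - h 0) / (s - 0)) \<longlongrightarrow> (y - x) \<bullet> D) (at_right 0)"
    unfolding has_field_derivative_iff by (rule tendsto_mono[OF at_le, rotated]) simp
  have "eventually (\<lambda>s. (h s - h 0) / (s - 0) \<le> f y - f x) (at_right 0)"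
    using eventually_at_right_real[OF zero_less_one]
  proof eventually_elim
    case (elim s)
    have "x + s *\<^sub>R (y - x) = (1 - s) *\<^sub>R x + s *\<^sub>R y"
      by (simp add: algebra_simps)
    then have "h s \<le> (1 - s) * f x + s * f y"
      unfolding h_def using convex_onD[OF conv, of s x y] elim assms(2,3) by simp
    then show ?case
      using elim by (simp add: h_def divide_simps algebra_simps)
  qed
  from tendsto_le[OF trivial_limit_at_right_real tendsto_const lim this]
  show ?thesis by simp
qed

lemma strictly_convex_on_gradient_ineq_strict:
  fixes f :: "'a::real_inner \<Rightarrow> real"
  assumes sc: "strictly_convex_on S f" and x: "x \<in> S" and y: "y \<in> S" and "x \<noteq> y"
    and D: "GDERIV f x :> D"
  shows "f x + (y - x) \<bullet> D < f y"
proof -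
  define m where "m = (1/2) *\<^sub>R y + (1 - 1/2) *\<^sub>R x"
  have "m \<in> S"
    using sc x y unfolding m_def strictly_convex_on_def by (auto intro: convexD)
  have "f m < (1/2) * f y + (1 - 1/2) * f x"
    unfolding m_def by (rule strictly_convex_onD[OF sc y x]) (use \<open>x \<noteq> y\<close> in auto)
  moreover have "f x + (m - x) \<bullet> D \<le> f m"
    by (rule convex_on_gradient_ineq[OF strictly_convex_on_imp_convex_on[OF sc] x \<open>m \<in> S\<close> D])
  moreover have "m - x = (1/2) *\<^sub>R (y - x)"
    unfolding m_def by (simp add: algebra_simps flip: scaleR_add_left)
  ultimately show ?thesis by (simp add: algebra_simps)
qed

lemma GDERIV_min_on_affine_orthogonal:
  fixes g :: "'a::real_inner \<Rightarrow> real"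
  assumes "open U" "x \<in> U" "subspace R" and D: "GDERIV g x :> D"
    and min: "\<And>y. y \<in> U \<Longrightarrow> y - x \<in> R \<Longrightarrow> g x \<le> g y" and "v \<in> R"
  shows "v \<bullet> D = 0"
proof -
  have "((\<lambda>t. g (x + t *\<^sub>R v)) has_derivative (*) (v \<bullet> D)) (at 0)"
    using has_real_derivative_GDERIV_line[of g x 0 v D] D
    unfolding has_field_derivative_def by simp
  moreover have "((\<lambda>t. x + t *\<^sub>R v) \<longlongrightarrow> x) (at 0)"
    by (auto intro!: tendsto_eq_intros)
  then have "eventually (\<lambda>t. x + t *\<^sub>R v \<in> U) (at 0)"
    using assms(1,2) by (rule topological_tendstoD)
  then have "eventually (\<lambda>t. g (x + 0 *\<^sub>R v) \<le> g (x + t *\<^sub>R v)) (at 0)"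
    by eventually_elim (use min subspace_scale[OF assms(3) \<open>v \<in> R\<close>] in auto)
  ultimately have "(*) (v \<bullet> D) = (\<lambda>h. 0)"
    by (rule has_derivative_local_min)
  then show ?thesis by (metis mult_cancel_left1)
qed

lemma dissipation_function_nonneg:
  assumes "dissipation_function psi gpsi"
  shows "0 \<le> psi f"
proof -
  have conv: "convex_on UNIV psi" and even: "psi (- f) = psi f" and "psi 0 = 0"
    using assms strictly_convex_on_imp_convex_on unfolding dissipation_function_def by auto
  have "psi ((1 - 1/2) *\<^sub>R f + (1/2) *\<^sub>R (- f)) \<le> (1 - 1/2) * psi f + (1/2) * psi (- f)"
    by (rule convex_onD[OF conv]) auto
  with even \<open>psi 0 = 0\<close> show ?thesis by simp
qed

lemma dissipation_function_grad_0:
  assumes "dissipation_function psi gpsi"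
  shows "gpsi 0 = 0"
proof -
  have "GDERIV psi 0 :> gpsi 0" and "psi 0 = 0"
    using assms unfolding dissipation_function_def by auto
  then have "gpsi 0 \<bullet> gpsi 0 = 0"
    using dissipation_function_nonneg[OF assms]
    by (intro GDERIV_min_on_affine_orthogonal[of UNIV 0 UNIV]) auto
  then show ?thesis by simp
qed

lemma dissipation_function_inner_grad_pos:
  assumes "dissipation_function psi gpsi" and "f \<noteq> 0"
  shows "0 < f \<bullet> gpsi f"
proof -
  have "strictly_convex_on UNIV psi" and "GDERIV psi f :> gpsi f" and "psi 0 = 0"
    using assms unfolding dissipation_function_def by auto
  then have "psi f + (0 - f) \<bullet> gpsi f < 0"
    using strictly_convex_on_gradient_ineq_strict[of UNIV psi f 0] assms(2) by auto
  with dissipation_function_nonneg[OF assms(1), of f] show ?thesis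
    by (simp add: inner_diff_left)
qed

lemma dissipation_function_grad_eq_0_iff:
  assumes "dissipation_function psi gpsi"
  shows "gpsi f = 0 \<longleftrightarrow> f = 0"
  using dissipation_function_grad_0[OF assms] dissipation_function_inner_grad_pos[OF assms, of f]
  by force

text \<open>Since \<open>\<langle>S\<^sup>T u, j\<rangle> = \<langle>u, S j\<rangle>\<close>, \<open>S j = 0\<close> makes the dissipation at \<open>f = S\<^sup>T u\<close> vanish.\<close>
lemma dissipation_function_kernel_iff:
  fixes S :: "real^'e^'n" and u :: "real^'n"
  assumes "dissipation_function psi gpsi"
  shows "S *v gpsi (transpose S *v u) = 0 \<longleftrightarrow> transpose S *v u = 0"
proof
  assume "S *v gpsi (transpose S *v u) = 0"
  then have "(transpose S *v u) \<bullet> gpsi (transpose S *v u) = 0"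
    by (simp add: dot_lmul_matrix)
  then show "transpose S *v u = 0"
    using dissipation_function_inner_grad_pos[OF assms] by force
qed (simp add: dissipation_function_grad_0[OF assms])

lemma bregman_self [simp]: "bregman Phi gPhi x x = 0"
  by (simp add: bregman_def)

lemma bregman_three_point:
  "bregman Phi gPhi x q = bregman Phi gPhi x p + bregman Phi gPhi p q + (x - p) \<bullet> (gPhi p - gPhi q)"
  unfolding bregman_def by (simp add: algebra_simps inner_diff_left inner_diff_right)

lemma bregman_pos:
  assumes "primal_thermodynamic Phi gPhi" "x \<in> pos_orthant" "p \<in> pos_orthant" "x \<noteq> p"
  shows "0 < bregman Phi gPhi x p"
  using strictly_convex_on_gradient_ineq_strict[of pos_orthant Phi p x "gPhi p"] assms
  unfolding primal_thermodynamic_def bregman_def by auto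

lemma bregman_GDERIV:
  assumes "GDERIV Phi x :> gPhi x"
  shows "GDERIV (\<lambda>x. bregman Phi gPhi x p) x :> gPhi x - gPhi p"
  using assms unfolding gderiv_def bregman_def
  by (auto intro!: derivative_eq_intros simp: inner_diff_right)

lemma bregman_convex_on:
  fixes Phi :: "real^'n \<Rightarrow> real"
  assumes "primal_thermodynamic Phi gPhi"
  shows "convex_on pos_orthant (\<lambda>x. bregman Phi gPhi x p)"
proof -
  have "convex_on pos_orthant Phi"
    using assms strictly_convex_on_imp_convex_on unfolding primal_thermodynamic_def by blast
  show ?thesis
  proof (rule convex_onI)
    fix t :: real and x y :: "real^'n"
    assume "0 < t" "t < 1" "x \<in> pos_orthant" "y \<in> pos_orthant"
    then have "Phi ((1 - t) *\<^sub>R x + t *\<^sub>R y) \<le> (1 - t) * Phi x + t * Phi y"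
      by (intro convex_onD[OF \<open>convex_on pos_orthant Phi\<close>]) auto
    then show "bregman Phi gPhi ((1 - t) *\<^sub>R x + t *\<^sub>R y) p
        \<le> (1 - t) * bregman Phi gPhi x p + t * bregman Phi gPhi y p"
      by (simp add: bregman_def inner_add_left inner_diff_left algebra_simps)
  qed (use \<open>convex_on pos_orthant Phi\<close> convex_on_imp_convex in blast)
qed

text \<open>Surjectivity of \<open>\<nabla>\<Phi>\<close> provides a point \<open>z\<close> with \<open>\<nabla>\<Phi>(z) = \<nabla>\<Phi>(p) + 1\<close>; the tangent
  plane of \<open>\<Phi>\<close> at \<open>z\<close> then dominates the \<open>\<ell>\<^sub>1\<close>-norm on the orthant.\<close>
lemma bregman_coercive:
  assumes pt: "primal_thermodynamic Phi gPhi"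
  obtains c where "\<And>x. x \<in> pos_orthant \<Longrightarrow> c + norm x \<le> bregman Phi gPhi x p"
proof -
  have conv: "convex_on pos_orthant Phi"
    and D: "\<And>x. x \<in> pos_orthant \<Longrightarrow> GDERIV Phi x :> gPhi x"
    using pt strictly_convex_on_imp_convex_on unfolding primal_thermodynamic_def by auto
  obtain z where z: "z \<in> pos_orthant" "gPhi z = gPhi p + 1"
    using pt unfolding primal_thermodynamic_def by (metis UNIV_I imageE)
  have "Phi z - z \<bullet> gPhi z - Phi p + p \<bullet> gPhi p + norm x \<le> bregman Phi gPhi x p"
    if x: "x \<in> pos_orthant" for x
  proof -
    have "Phi z + (x - z) \<bullet> gPhi z \<le> Phi x"
      using convex_on_gradient_ineq[OF conv z(1) x D[OF z(1)]] .
    moreover have "norm x \<le> x \<bullet> 1"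
      using norm_le_l1_cart[of x] x unfolding pos_orthant_def inner_vec_def
      by (simp add: abs_of_pos)
    ultimately show ?thesis
      unfolding bregman_def z(2) by (simp add: inner_diff_left inner_add_right)
  qed
  then show thesis by (rule that)
qed

lemma pos_orthant_segment:
  assumes "x \<in> pos_orthant" "\<forall>i. 0 \<le> y $ i" "0 < s" "s \<le> 1"
  shows "s *\<^sub>R x + (1 - s) *\<^sub>R y \<in> pos_orthant"
proof (unfold pos_orthant_def, intro CollectI allI)
  fix i
  have "0 < s * x $ i" "0 \<le> (1 - s) * y $ i"
    using assms unfolding pos_orthant_def by auto
  then show "0 < (s *\<^sub>R x + (1 - s) *\<^sub>R y) $ i" by simp
qed

lemma not_filterlim_deriv_at_bot_if_sandwiched:
  fixes H :: "real \<Rightarrow> real"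
  assumes diff: "\<And>s. 0 < s \<Longrightarrow> s < 1 \<Longrightarrow> H differentiable (at s)"
    and lower: "\<And>s. 0 < s \<Longrightarrow> s < 1 \<Longrightarrow> c + a * s \<le> H s"
    and upper: "\<And>s. 0 < s \<Longrightarrow> s < 1 \<Longrightarrow> H s \<le> c + b * s"
  shows "\<not> filterlim (deriv H) at_bot (at_right 0)"
proof
  assume "filterlim (deriv H) at_bot (at_right 0)"
  define K where "K = \<bar>a\<bar> + \<bar>b\<bar> + 1"
  have "eventually (\<lambda>s. deriv H s \<le> - K) (at_right 0)"
    using \<open>filterlim (deriv H) at_bot (at_right 0)\<close> by (simp add: filterlim_at_bot)
  then obtain d :: real where "0 < d" and d: "\<And>s. 0 < s \<Longrightarrow> s < d \<Longrightarrow> deriv H s \<le> - K"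
    unfolding eventually_at_right_field by blast
  define t where "t = min d 1 / 2"
  define s where "s = t / (2 * (b + K))"
  have t: "0 < t" "t < 1" "t < d" and K: "1 \<le> a + K" "1 \<le> b + K"
    using \<open>0 < d\<close> unfolding t_def K_def by auto
  then have "t * 1 < t * (2 * (b + K))"
    by (intro mult_strict_left_mono) auto
  then have s: "0 < s" "s < t" "s * (b + K) = t / 2"
    unfolding s_def using t K by (auto simp: divide_less_eq field_simps)
  have "continuous_on {s..t} H"
    using s t diff
    by (intro continuous_at_imp_continuous_on) (auto intro: differentiable_imp_continuous_within)
  then obtain l \<xi> where \<xi>: "s < \<xi>" "\<xi> < t" "DERIV H \<xi> :> l" and mvt: "H t - H s = (t - s) * l"
    using MVT[OF \<open>s < t\<close>] diff s t by (metis less_trans order.strict_trans2 less_imp_le)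
  have "l \<le> - K"
    using d[of \<xi>] \<xi> s t DERIV_imp_deriv[OF \<xi>(3)] by simp
  then have "H t \<le> H s - (t - s) * K"
    using mvt mult_left_mono[of l "- K" "t - s"] s by simp
  then have "t * (a + K) \<le> s * (b + K)"
    using lower[of t] upper[of s] s t by (simp add: algebra_simps)
  then show False
    using s t K mult_left_mono[of 1 "a + K" t] by simp
qed

text \<open>On the segment from \<open>xs\<close> to \<open>x0\<close>, \<open>\<Phi>\<close> is squeezed between two affine functions that
  agree at \<open>xs\<close>; this is incompatible with the slope tending to \<open>-\<infinity>\<close>, as steepness demands
  at a boundary point.\<close>
lemma pos_orthant_if_bregman_segment_bounds:
  assumes pt: "primal_thermodynamic Phi gPhi" and x0: "x0 \<in> pos_orthant"
    and nonneg: "\<forall>i. 0 \<le> xs $ i"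
    and lower: "\<And>s. 0 < s \<Longrightarrow> s < 1 \<Longrightarrow> m \<le> bregman Phi gPhi (s *\<^sub>R x0 + (1 - s) *\<^sub>R xs) p"
    and upper: "\<And>s. 0 < s \<Longrightarrow> s < 1 \<Longrightarrow>
      bregman Phi gPhi (s *\<^sub>R x0 + (1 - s) *\<^sub>R xs) p \<le> s * bregman Phi gPhi x0 p + (1 - s) * m"
  shows "xs \<in> pos_orthant"
proof (rule ccontr)
  assume "xs \<notin> pos_orthant"
  define H where "H s = Phi (s *\<^sub>R x0 + (1 - s) *\<^sub>R xs)" for s
  have steep: "filterlim (deriv H) at_bot (at_right 0)"
    using pt x0 nonneg \<open>xs \<notin> pos_orthant\<close> unfolding primal_thermodynamic_def H_def by blast
  have line: "s *\<^sub>R x0 + (1 - s) *\<^sub>R xs = xs + s *\<^sub>R (x0 - xs)" for s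
    by (simp add: algebra_simps)
  have "H differentiable (at s)" if "0 < s" "s < 1" for s
  proof -
    have "GDERIV Phi (xs + s *\<^sub>R (x0 - xs)) :> gPhi (xs + s *\<^sub>R (x0 - xs))"
      using pt pos_orthant_segment[OF x0 nonneg, of s] that
      unfolding primal_thermodynamic_def line by auto
    from has_real_derivative_GDERIV_line[OF this] show ?thesis
      unfolding H_def line real_differentiable_def by blast
  qed
  moreover
  define c where "c = m + Phi p + (xs - p) \<bullet> gPhi p"
  define a where "a = (x0 - xs) \<bullet> gPhi p"
  have H_eq: "H s = bregman Phi gPhi (s *\<^sub>R x0 + (1 - s) *\<^sub>R xs) p - m + c + a * s" for s
    unfolding H_def bregman_def c_def a_def by (simp add: inner_simps algebra_simps)
  have "c + a * s \<le> H s" if "0 < s" "s < 1" for s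
    using lower[OF that] H_eq by simp
  moreover have "H s \<le> c + (a + bregman Phi gPhi x0 p - m) * s" if "0 < s" "s < 1" for s
    using upper[OF that] H_eq[of s] by (simp add: algebra_simps)
  ultimately show False
    using not_filterlim_deriv_at_bot_if_sandwiched steep by blast
qed

lemma coercive_minimising_sequence:
  fixes f :: "'a::{heine_borel, real_normed_vector} \<Rightarrow> real"
  assumes "P \<noteq> {}" and coercive: "\<And>x. x \<in> P \<Longrightarrow> c + norm x \<le> f x"
  obtains X xs m where "\<forall>k. X k \<in> P" "X \<longlonglongrightarrow> xs" "(\<lambda>k. f (X k)) \<longlonglongrightarrow> m"
    "\<And>x. x \<in> P \<Longrightarrow> m \<le> f x"
proof -
  define m where "m = Inf (f ` P)"
  have "bdd_below (f ` P)"
    using coercive by (intro bdd_belowI[of _ c]) (smt (verit) imageE norm_ge_zero)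
  then have m_le: "m \<le> f x" if "x \<in> P" for x
    unfolding m_def using that by (simp add: cInf_lower)
  have "\<exists>x\<in>P. f x < m + inverse (real (Suc k))" for k
    using cInf_lessD[of "f ` P" "m + inverse (real (Suc k))"] \<open>P \<noteq> {}\<close> unfolding m_def by auto
  then obtain Y where Y: "\<And>k. Y k \<in> P" "\<And>k. f (Y k) < m + inverse (real (Suc k))"
    by metis
  obtain x0 where "x0 \<in> P" using \<open>P \<noteq> {}\<close> by blast
  have "Y k \<in> cball 0 (f x0 + 1 - c)" for k
  proof -
    have "inverse (real (Suc k)) \<le> 1"
      by (simp add: field_simps)
    then show ?thesis
      using coercive[OF Y(1)[of k]] Y(2)[of k] m_le[OF \<open>x0 \<in> P\<close>] by simp
  qed
  then obtain xs r where "strict_mono r" "(Y \<circ> r) \<longlonglongrightarrow> xs"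
    using seq_compactE[OF compact_imp_seq_compact[OF compact_cball]] by metis
  moreover have "(\<lambda>k. f (Y k)) \<longlonglongrightarrow> m"
  proof (rule real_tendsto_sandwich)
    show "\<forall>\<^sub>F k in sequentially. m \<le> f (Y k)"
      using m_le Y(1) by simp
    show "\<forall>\<^sub>F k in sequentially. f (Y k) \<le> m + inverse (real (Suc k))"
      by (intro always_eventually allI less_imp_le Y(2))
  qed (simp_all only: LIMSEQ_inverse_real_of_nat_add tendsto_const)
  ultimately show thesis
    using that[of "Y \<circ> r" xs m] Y(1) m_le LIMSEQ_subseq_LIMSEQ[of "\<lambda>k. f (Y k)" m r]
    by (simp add: o_def)
qed

lemma convex_on_segment_to_limit_le:
  fixes f :: "'a::real_normed_vector \<Rightarrow> real"
  assumes conv: "convex_on A f" and "x0 \<in> A" "\<forall>k. X k \<in> A"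
    and "X \<longlonglongrightarrow> xs" "(\<lambda>k. f (X k)) \<longlonglongrightarrow> m"
    and "0 \<le> s" "s \<le> 1" and cont: "isCont f (s *\<^sub>R x0 + (1 - s) *\<^sub>R xs)"
  shows "f (s *\<^sub>R x0 + (1 - s) *\<^sub>R xs) \<le> s * f x0 + (1 - s) * m"
proof (rule LIMSEQ_le)
  show "(\<lambda>k. f (s *\<^sub>R x0 + (1 - s) *\<^sub>R X k)) \<longlonglongrightarrow> f (s *\<^sub>R x0 + (1 - s) *\<^sub>R xs)"
    by (intro isCont_tendsto_compose[OF cont] tendsto_intros assms)
  show "(\<lambda>k. s * f x0 + (1 - s) * f (X k)) \<longlonglongrightarrow> s * f x0 + (1 - s) * m"
    by (intro tendsto_intros assms)
  have "f ((1 - (1 - s)) *\<^sub>R x0 + (1 - s) *\<^sub>R X k) \<le> (1 - (1 - s)) * f x0 + (1 - s) * f (X k)" for k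
    using assms by (intro convex_onD[OF conv]) auto
  then show "\<exists>N. \<forall>k\<ge>N. f (s *\<^sub>R x0 + (1 - s) *\<^sub>R X k) \<le> s * f x0 + (1 - s) * f (X k)"
    by simp
qed

lemma bregman_argmin_exists:
  fixes C :: "(real^'n) set"
  assumes pt: "primal_thermodynamic Phi gPhi"
    and "closed C" "convex C" and x0: "x0 \<in> C" "x0 \<in> pos_orthant"
  obtains xs where "xs \<in> C \<inter> pos_orthant"
    "\<And>x. x \<in> C \<inter> pos_orthant \<Longrightarrow> bregman Phi gPhi xs p \<le> bregman Phi gPhi x p"
proof -
  define f where "f x = bregman Phi gPhi x p" for x
  have cont: "isCont f x" if "x \<in> pos_orthant" for x
  proof -
    have "GDERIV Phi x :> gPhi x"
      using pt that unfolding primal_thermodynamic_def by blast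
    from bregman_GDERIV[of Phi x gPhi p, OF this] show ?thesis
      unfolding gderiv_def f_def by (rule has_derivative_continuous)
  qed
  have conv: "convex_on pos_orthant f"
    unfolding f_def by (rule bregman_convex_on[OF pt])
  obtain c where c: "\<And>x. x \<in> pos_orthant \<Longrightarrow> c + norm x \<le> f x"
    using bregman_coercive[OF pt, where p = p] unfolding f_def by metis
  obtain X xs m where X: "\<forall>k. X k \<in> C \<inter> pos_orthant" "X \<longlonglongrightarrow> xs" "(\<lambda>k. f (X k)) \<longlonglongrightarrow> m"
    and m_le: "\<And>x. x \<in> C \<inter> pos_orthant \<Longrightarrow> m \<le> f x"
    by (rule coercive_minimising_sequence[of "C \<inter> pos_orthant" c f]) (use x0 c in auto)
  have "xs \<in> C"
    by (rule closed_sequentially[OF \<open>closed C\<close> _ X(2)]) (use X(1) in blast)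
  have nonneg: "\<forall>i. 0 \<le> xs $ i"
  proof
    fix i
    have "\<forall>k. 0 \<le> X k $ i"
      using X(1) unfolding pos_orthant_def by (auto intro: less_imp_le)
    then show "0 \<le> xs $ i"
      by (intro LIMSEQ_le_const[OF tendsto_vec_nth[OF X(2)]]) auto
  qed
  have segment: "s *\<^sub>R x0 + (1 - s) *\<^sub>R xs \<in> C \<inter> pos_orthant" if "0 < s" "s < 1" for s
    using pos_orthant_segment[OF x0(2) nonneg, of s] that
      convexD[OF \<open>convex C\<close> x0(1) \<open>xs \<in> C\<close>, of s "1 - s"]
    by simp
  have "xs \<in> pos_orthant"
  proof (rule pos_orthant_if_bregman_segment_bounds[OF pt x0(2) nonneg])
    fix s :: real assume "0 < s" "s < 1"
    show "m \<le> bregman Phi gPhi (s *\<^sub>R x0 + (1 - s) *\<^sub>R xs) p"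
      using m_le[OF segment[OF \<open>0 < s\<close> \<open>s < 1\<close>]] unfolding f_def .
    show "bregman Phi gPhi (s *\<^sub>R x0 + (1 - s) *\<^sub>R xs) p \<le> s * bregman Phi gPhi x0 p + (1 - s) * m"
      using convex_on_segment_to_limit_le[OF conv x0(2) _ X(2,3), of s] X(1)
        cont[OF IntD2[OF segment[OF \<open>0 < s\<close> \<open>s < 1\<close>]]] \<open>0 < s\<close> \<open>s < 1\<close>
      unfolding f_def by simp
  qed
  then have "f xs = m"
    using LIMSEQ_unique[OF isCont_tendsto_compose[OF cont X(2)] X(3)] by blast
  then show thesis
    using that[of xs] \<open>xs \<in> C\<close> \<open>xs \<in> pos_orthant\<close> m_le unfolding f_def by simp
qed

lemma open_pos_orthant: "open (pos_orthant :: (real^'n) set)"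
proof -
  have "pos_orthant = (\<Inter>i. {x :: real^'n. 0 < x $ i})"
    unfolding pos_orthant_def by auto
  also have "open \<dots>"
    by (intro open_INT) (auto intro: open_halfspace_component_gt_cart)
  finally show ?thesis .
qed

lemma Psc_subset_pos_orthant: "Psc S x0 \<subseteq> pos_orthant"
  unfolding Psc_def by auto

lemma Meq_subset_pos_orthant: "Meq S gPhi xt \<subseteq> pos_orthant"
  unfolding Meq_def by auto

lemma self_mem_Psc: "x0 \<in> pos_orthant \<Longrightarrow> x0 \<in> Psc S x0"
  unfolding Psc_def by (auto intro: range_eqI[of _ _ 0])

lemma self_mem_Meq: "xt \<in> pos_orthant \<Longrightarrow> xt \<in> Meq S gPhi xt"
  unfolding Meq_def by simp

lemma Psc_Meq_orthogonal:
  assumes "a \<in> Psc S x0" "b \<in> Psc S x0" "c \<in> Meq S gPhi xt" "d \<in> Meq S gPhi xt"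
  shows "(a - b) \<bullet> (gPhi c - gPhi d) = 0"
proof -
  obtain va vb where "a - x0 = S *v va" "b - x0 = S *v vb"
    using assms(1,2) unfolding Psc_def by auto
  moreover have "a - b = (a - x0) - (b - x0)"
    by simp
  ultimately have "a - b = S *v (va - vb)"
    by (simp add: matrix_vector_mult_diff_distrib)
  moreover have "transpose S *v (gPhi c - gPhi d) = 0"
  proof -
    have "gPhi c - gPhi d = (gPhi c - gPhi xt) - (gPhi d - gPhi xt)"
      by simp
    moreover have "transpose S *v (gPhi c - gPhi xt) = 0" "transpose S *v (gPhi d - gPhi xt) = 0"
      using assms(3,4) unfolding Meq_def by auto
    ultimately show ?thesis
      by (simp add: matrix_vector_mult_diff_distrib)
  qed
  ultimately show ?thesis
    by (metis dot_lmul_matrix inner_commute inner_zero_left transpose_matrix_vector)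
qed

lemma bregman_pythagoras:
  assumes "x \<in> Psc S x0" "p \<in> Psc S x0" "p \<in> Meq S gPhi xt" "q \<in> Meq S gPhi xt"
  shows "bregman Phi gPhi x q = bregman Phi gPhi x p + bregman Phi gPhi p q"
  using bregman_three_point[of Phi gPhi x q p] Psc_Meq_orthogonal[OF assms] by simp

lemma Psc_Meq_subsingleton:
  assumes pt: "primal_thermodynamic Phi gPhi"
    and p: "p \<in> Psc S x0" "p \<in> Meq S gPhi xt" and q: "q \<in> Psc S x0" "q \<in> Meq S gPhi xt"
  shows "p = q"
proof (rule ccontr)
  assume "p \<noteq> q"
  have "0 = bregman Phi gPhi q p + bregman Phi gPhi p q"
    using bregman_pythagoras[OF q(1) p q(2)] by simp
  moreover have "0 < bregman Phi gPhi q p" "0 < bregman Phi gPhi p q"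
    using bregman_pos[OF pt] \<open>p \<noteq> q\<close> p(1) q(1) Psc_subset_pos_orthant by blast+
  ultimately show False by simp
qed

text \<open>At the minimiser of \<open>\<D>[\<cdot>\<parallel>x\<^sub>t]\<close> over \<open>P\<^sup>s\<^sup>c(x\<^sub>0)\<close>, the gradient \<open>u\<close> is orthogonal to
  \<open>S S\<^sup>T u \<in> Im S\<close>, so \<open>|S\<^sup>T u|\<^sup>2 = 0\<close>.\<close>
lemma Psc_Meq_nonempty:
  fixes S :: "real^'e^'n"
  assumes pt: "primal_thermodynamic Phi gPhi" and "x0 \<in> pos_orthant"
  obtains x where "x \<in> Psc S x0" "x \<in> Meq S gPhi xt"
proof -
  define R where "R = range ((*v) S)"
  have "subspace R"
    unfolding R_def by (rule linear_subspace_image[OF matrix_vector_mul_linear subspace_UNIV])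
  have Psc_eq: "Psc S x0 = (+) x0 ` R \<inter> pos_orthant"
    unfolding Psc_def R_def by (auto simp: image_iff algebra_simps)
  have "x0 \<in> (+) x0 ` R"
    using subspace_0[OF \<open>subspace R\<close>] by (metis add.right_neutral image_eqI)
  then obtain x where x: "x \<in> Psc S x0"
    and min: "\<And>y. y \<in> Psc S x0 \<Longrightarrow> bregman Phi gPhi x xt \<le> bregman Phi gPhi y xt"
    unfolding Psc_eq
    by (rule bregman_argmin_exists[where p = xt, OF pt
          closed_translation[OF closed_subspace[OF \<open>subspace R\<close>]]
          convex_translation[OF subspace_imp_convex[OF \<open>subspace R\<close>]] _ \<open>x0 \<in> pos_orthant\<close>])
      blast
  define u where "u = gPhi x - gPhi xt"
  have "x \<in> pos_orthant"
    using x Psc_subset_pos_orthant by blast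
  have "(S *v (transpose S *v u)) \<bullet> u = 0"
  proof (rule GDERIV_min_on_affine_orthogonal[OF open_pos_orthant \<open>x \<in> pos_orthant\<close> \<open>subspace R\<close>])
    show "GDERIV (\<lambda>y. bregman Phi gPhi y xt) x :> u"
      unfolding u_def using pt \<open>x \<in> pos_orthant\<close>
      by (intro bregman_GDERIV) (auto simp: primal_thermodynamic_def)
    show "bregman Phi gPhi x xt \<le> bregman Phi gPhi y xt" if "y \<in> pos_orthant" "y - x \<in> R" for y
    proof (rule min)
      have "x - x0 \<in> R"
        using x unfolding Psc_def R_def by blast
      then have "(y - x) + (x - x0) \<in> R"
        using subspace_add[OF \<open>subspace R\<close> \<open>y - x \<in> R\<close>] by blast
      then have "y - x0 \<in> R"
        by simp
      then show "y \<in> Psc S x0"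
        using that unfolding Psc_def R_def by blast
    qed
  qed (simp add: R_def)
  then have "transpose S *v u = 0"
    by (metis dot_lmul_matrix inner_commute inner_eq_zero_iff transpose_matrix_vector)
  then show thesis
    using that x \<open>x \<in> pos_orthant\<close> unfolding Meq_def u_def by blast
qed

lemma argmin_eq_singletonI:
  fixes g h :: "'a \<Rightarrow> real"
  assumes "a \<in> A" and "\<And>x. x \<in> A \<Longrightarrow> g x = g a + h x"
    and "\<And>x. x \<in> A \<Longrightarrow> x \<noteq> a \<Longrightarrow> 0 < h x"
  shows "{x \<in> A. \<forall>y\<in>A. g x \<le> g y} = {a}"
proof -
  have "h a = 0"
    using assms(2)[OF \<open>a \<in> A\<close>] by simp
  have le: "g a \<le> g y" if "y \<in> A" for y
    using assms(2,3)[OF that] \<open>h a = 0\<close> by (cases "y = a") auto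
  have "x = a" if "x \<in> A" "\<forall>y\<in>A. g x \<le> g y" for x
  proof (rule ccontr)
    assume "x \<noteq> a"
    then show False
      using assms(2,3)[OF \<open>x \<in> A\<close>] that(2) \<open>a \<in> A\<close> by fastforce
  qed
  then show ?thesis
    using le \<open>a \<in> A\<close> by blast
qed

lemma Psc_argmin_bregman:
  assumes pt: "primal_thermodynamic Phi gPhi" and "xt \<in> pos_orthant"
    and x: "x \<in> Psc S x0" "x \<in> Meq S gPhi xt"
  shows "{y \<in> Psc S x0. \<forall>z \<in> Psc S x0. bregman Phi gPhi y xt \<le> bregman Phi gPhi z xt} = {x}"
proof (rule argmin_eq_singletonI[OF x(1)])
  fix y assume "y \<in> Psc S x0"
  then show "bregman Phi gPhi y xt = bregman Phi gPhi x xt + bregman Phi gPhi y x"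
    using bregman_pythagoras[OF _ x self_mem_Meq[OF \<open>xt \<in> pos_orthant\<close>]] by simp
  show "y \<noteq> x \<Longrightarrow> 0 < bregman Phi gPhi y x"
    using \<open>y \<in> Psc S x0\<close> x(1) Psc_subset_pos_orthant by (intro bregman_pos[OF pt]) auto
qed

lemma Meq_argmin_bregman:
  assumes pt: "primal_thermodynamic Phi gPhi" and "x0 \<in> pos_orthant"
    and x: "x \<in> Psc S x0" "x \<in> Meq S gPhi xt"
  shows "{q \<in> Meq S gPhi xt. \<forall>q' \<in> Meq S gPhi xt. bregman Phi gPhi x0 q \<le> bregman Phi gPhi x0 q'}
    = {x}"
proof (rule argmin_eq_singletonI[OF x(2)])
  fix q assume "q \<in> Meq S gPhi xt"
  then show "bregman Phi gPhi x0 q = bregman Phi gPhi x0 x + bregman Phi gPhi x q"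
    using bregman_pythagoras[OF self_mem_Psc[OF \<open>x0 \<in> pos_orthant\<close>] x] by simp
  show "q \<noteq> x \<Longrightarrow> 0 < bregman Phi gPhi x q"
    using \<open>q \<in> Meq S gPhi xt\<close> x(2) Meq_subset_pos_orthant by (intro bregman_pos[OF pt]) auto
qed

lemma Meq_eq_MDB:
  assumes "\<forall>x\<in>pos_orthant. dissipation_function (Psi x) (gPsi x)"
  shows "Meq S gPhi xt = MDB S gPhi gPsi xt"
proof -
  have "gPsi x (transpose S *v (gPhi x - gPhi xt)) = 0
      \<longleftrightarrow> transpose S *v (gPhi x - gPhi xt) = 0" if "x \<in> pos_orthant" for x
    using assms that dissipation_function_grad_eq_0_iff by blast
  then show ?thesis
    unfolding Meq_def MDB_def flux_def by auto
qed

lemma eq_flow_rhs_eq_0_iff: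
  assumes "dissipation_function (Psi x) (gPsi x)" and "x \<in> pos_orthant"
  shows "eq_flow_rhs S gPhi gPsi xt x = 0 \<longleftrightarrow> x \<in> Meq S gPhi xt"
  using dissipation_function_kernel_iff[OF assms(1)] assms(2)
  unfolding eq_flow_rhs_def flux_def Meq_def by simp

lemma Psc_steady_states:
  assumes "\<forall>x\<in>pos_orthant. dissipation_function (Psi x) (gPsi x)"
  shows "{x \<in> Psc S x0. eq_flow_rhs S gPhi gPsi xt x = 0} = Psc S x0 \<inter> Meq S gPhi xt"
proof -
  have "eq_flow_rhs S gPhi gPsi xt x = 0 \<longleftrightarrow> x \<in> Meq S gPhi xt" if "x \<in> Psc S x0" for x
    using that assms Psc_subset_pos_orthant by (intro eq_flow_rhs_eq_0_iff[where Psi = Psi]) auto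
  then show ?thesis
    by auto
qed

theorem mainTheorem4:
  fixes S :: "real^'e^'n"
    and Phi :: "real^'n \<Rightarrow> real" and gPhi :: "real^'n \<Rightarrow> real^'n"
    and Psi :: "real^'n \<Rightarrow> real^'e \<Rightarrow> real" and gPsi :: "real^'n \<Rightarrow> real^'e \<Rightarrow> real^'e"
    and xt x0 :: "real^'n"
  assumes "\<forall>i j. S $ i $ j \<in> \<int>"
    and "primal_thermodynamic Phi gPhi"
    and "xt \<in> pos_orthant"
    and "\<forall>x\<in>pos_orthant. dissipation_function (Psi x) (gPsi x)"
    and "x0 \<in> pos_orthant"
  shows "\<exists>xeq.
           Psc S x0 \<inter> Meq S gPhi xt = {xeq} \<and>
           {x \<in> Psc S x0. eq_flow_rhs S gPhi gPsi xt x = 0} = {xeq} \<and>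
           {x \<in> Psc S x0. \<forall>y \<in> Psc S x0. bregman Phi gPhi x xt \<le> bregman Phi gPhi y xt} = {xeq} \<and>
           {q \<in> Meq S gPhi xt. \<forall>q' \<in> Meq S gPhi xt. bregman Phi gPhi x0 q \<le> bregman Phi gPhi x0 q'} = {xeq} \<and>
           Meq S gPhi xt = MDB S gPhi gPsi xt"
proof -
  obtain xeq where xeq: "xeq \<in> Psc S x0" "xeq \<in> Meq S gPhi xt"
    using Psc_Meq_nonempty[OF assms(2,5)] .
  have "Psc S x0 \<inter> Meq S gPhi xt = {xeq}"
    using Psc_Meq_subsingleton[OF assms(2) _ _ xeq] xeq by blast
  then show ?thesis
    using Psc_steady_states[OF assms(4)] Meq_eq_MDB[OF assms(4)]
      Psc_argmin_bregman[OF assms(2,3) xeq] Meq_argmin_bregman[OF assms(2,5) xeq]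
    by auto
qed

end
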